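(* Let $n\geq 1$ and $k\geq 0$ be integers and $d_1,\dots,d_k$ positive integers with $\sum_{i=1}^k d_i\leq n+1$. Then $F_n(t;d_1,\dots,d_k)$ is a polynomial in $t$ with non-negative coefficients.
   Context: For an integer $m>0$, $\binom{t}{m}=\frac{1}{m!}\prod_{i=0}^{m-1}(t-i)$. For $I\subset\{1,\dots,k\}$, $d_I=\sum_{i\in I}d_i$ (with $d_\emptyset=0$). Define $F_n(t;d_1,\dots,d_k)=\sum_{I\subset\{1,\dots,k\}}(-1)^{|I|}\binom{t+n-d_I}{n}$. *)

theory Defs
  imports Complex_Main "HOL-Computational_Algebra.Polynomial"
begin

definition F :: "nat \<Rightarrow> nat \<Rightarrow> (nat \<Rightarrow> nat) \<Rightarrow> real \<Rightarrow> real" where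
  "F n k d t = (\<Sum>I\<in>Pow {1..k}. (-1) ^ card I * ((t + real n - real (sum d I)) gchoose n))"

end

theory Submission
  imports Defs "HOL-Computational_Algebra.Fundamental_Theorem_Algebra"
begin

text \<open>Write \<open>S\<close> for the shift \<open>(S f)(z) = f (z - 1)\<close>. Then \<open>F\<^sub>n(z) = \<Prod>\<^sub>i (1 - S\<^bsup>d\<^sub>i\<^esup>) B(z)\<close> with
  \<open>B(z) = (z + n) gchoose n = (z + 1) \<cdots> (z + n) / n!\<close>, and \<open>\<Prod>\<^sub>i (1 - X\<^bsup>d\<^sub>i\<^esup>)\<close> splits into
  \<open>d\<^sub>1 + \<dots> + d\<^sub>k \<le> n + 1\<close> linear factors \<open>X - a\<close> with \<open>|a| = 1\<close>. A Lee--Yang type argument shows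
  that each application of \<open>S - a\<close> consumes one factor \<open>z + j\<close> of \<open>B\<close> and keeps all other zeros on a
  vertical line; after at most \<open>n + 1\<close> steps every zero of \<open>F\<^sub>n\<close> lies in \<open>Re z \<le> 0\<close> (or \<open>F\<^sub>n = 0\<close>).
  A real polynomial with this property is a constant times a product of linear and quadratic
  factors with non-negative coefficients, and \<open>F\<^sub>n(1) \<ge> 0\<close> fixes the sign of the constant.\<close>

section \<open>Real polynomials with zeros in the closed left half-plane\<close>

abbreviation cpoly :: "real poly \<Rightarrow> complex poly" where
  "cpoly \<equiv> map_poly complex_of_real"

lemma cpoly_add: "cpoly (p + q) = cpoly p + cpoly q"
  by (rule poly_eqI) (simp add: coeff_map_poly)

lemma cpoly_smult: "cpoly (smult c p) = smult (of_real c) (cpoly p)"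
  by (rule poly_eqI) (simp add: coeff_map_poly)

lemma cpoly_mult: "cpoly (p * q) = cpoly p * cpoly q"
  by (induction p) (auto simp: map_poly_pCons cpoly_add cpoly_smult)

lemma cpoly_sum: "cpoly (\<Sum>i\<in>A. f i) = (\<Sum>i\<in>A. cpoly (f i))"
  by (induction A rule: infinite_finite_induct) (auto simp: cpoly_add)

lemma cpoly_prod: "cpoly (\<Prod>i\<in>A. f i) = (\<Prod>i\<in>A. cpoly (f i))"
  by (induction A rule: infinite_finite_induct) (auto simp: cpoly_mult)

lemma poly_cpoly_of_real: "poly (cpoly p) (of_real x) = of_real (poly p x)"
  by (induction p) (auto simp: map_poly_pCons)

lemma poly_cpoly_cnj: "poly (cpoly p) (cnj z) = cnj (poly (cpoly p) z)"
  by (rule poly_cnj_real [symmetric]) (simp add: coeff_map_poly)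

lemma real_poly_conj_roots_dvd:
  fixes p :: "real poly"
  assumes root: "poly (cpoly p) z = 0" and nonreal: "Im z \<noteq> 0"
  shows "[:cmod z ^ 2, -2 * Re z, 1:] dvd p"
proof -
  define r where "r = [:cmod z ^ 2, -2 * Re z, 1:]"
  define m where "m = p mod r"
  have "r \<noteq> 0" by (simp add: r_def)
  have r_roots: "poly (cpoly r) w = 0" if "w \<in> {z, cnj z}" for w
    using that cmod_power2[of z]
    by (auto simp: r_def map_poly_pCons complex_eq_iff power2_eq_square algebra_simps)
  have "cpoly p = cpoly (r * (p div r) + m)" by (simp add: m_def)
  then have "cpoly p = cpoly r * cpoly (p div r) + cpoly m" by (simp only: cpoly_add cpoly_mult)
  then have m_roots: "{z, cnj z} \<subseteq> {w. poly (cpoly m) w = 0}"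
    using r_roots root by (auto simp: poly_cpoly_cnj)
  have "m = 0"
  proof (rule ccontr)
    assume "m \<noteq> 0"
    then have "cpoly m \<noteq> 0" by (simp add: map_poly_eq_0_iff)
    have "2 = card {z, cnj z}" using nonreal by (simp add: complex_eq_iff)
    also have "\<dots> \<le> card {w. poly (cpoly m) w = 0}"
      using m_roots poly_roots_finite[OF \<open>cpoly m \<noteq> 0\<close>] by (rule card_mono[rotated])
    also have "\<dots> \<le> degree m"
      using card_poly_roots_bound[OF \<open>cpoly m \<noteq> 0\<close>] by (simp add: degree_map_poly)
    also have "\<dots> < 2"
      using degree_mod_less'[OF \<open>r \<noteq> 0\<close> \<open>m \<noteq> 0\<close>[unfolded m_def]] by (simp add: m_def r_def)
    finally show False by simp
  qed
  then show ?thesis by (simp add: m_def r_def mod_eq_0_iff_dvd)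
qed

lemma real_poly_root_left_half_plane_factor:
  fixes p :: "real poly"
  assumes root: "poly (cpoly p) z = 0" and "Re z \<le> 0"
  obtains r where "r dvd p" "degree r > 0" "lead_coeff r = 1" "\<And>j. coeff r j \<ge> 0"
proof (cases "Im z = 0")
  case True
  then have "z = of_real (Re z)" by (simp add: complex_eq_iff)
  then have "poly p (Re z) = 0"
    using root poly_cpoly_of_real[of p "Re z"] by simp
  then have "[:-Re z, 1:] dvd p" by (simp add: poly_eq_0_iff_dvd)
  with \<open>Re z \<le> 0\<close> show ?thesis
    by (intro that) (auto simp: coeff_pCons split: nat.split)
next
  case False
  with \<open>Re z \<le> 0\<close> real_poly_conj_roots_dvd[OF root False] show ?thesis
    by (intro that) (auto simp: coeff_pCons split: nat.split)
qed

text \<open>Each zero in the closed left half-plane splits off a monic real factor with non-negative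
  coefficients: \<open>X - z\<close> for real \<open>z\<close>, \<open>(X - z)(X - cnj z)\<close> otherwise.\<close>
lemma real_poly_left_half_plane_coeff_sign:
  fixes p :: "real poly"
  assumes "\<forall>z. poly (cpoly p) z = 0 \<longrightarrow> Re z \<le> 0"
  shows "lead_coeff p * coeff p j \<ge> 0"
  using assms
proof (induction "degree p" arbitrary: p j rule: less_induct)
  case less
  show ?case
  proof (cases "degree p = 0")
    case True
    then show ?thesis by (cases j) (auto simp: coeff_eq_0)
  next
    case False
    then have "\<not> constant (poly (cpoly p))" by (simp add: constant_degree degree_map_poly)
    then obtain z where z: "poly (cpoly p) z = 0" using fundamental_theorem_of_algebra by blast
    obtain r where r: "r dvd p" "degree r > 0" "lead_coeff r = 1" "\<And>j. coeff r j \<ge> 0"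
      using real_poly_root_left_half_plane_factor[OF z] less.prems z by blast
    from r(1) obtain q where p: "p = r * q" by (rule dvdE)
    have "p \<noteq> 0" using False by auto
    then have "q \<noteq> 0" "r \<noteq> 0" using p by auto
    then have "degree q < degree p" using p r(2) by (simp add: degree_mult_eq)
    moreover have "\<forall>z. poly (cpoly q) z = 0 \<longrightarrow> Re z \<le> 0"
      using less.prems by (auto simp: p cpoly_mult)
    ultimately have q_sign: "lead_coeff q * coeff q i \<ge> 0" for i
      using less.hyps by blast
    have "lead_coeff p = lead_coeff q" by (simp add: p lead_coeff_mult r(3))
    moreover have "coeff p j = (\<Sum>i\<le>j. coeff r i * coeff q (j - i))"
      unfolding p by (rule coeff_mult)
    ultimately have "lead_coeff p * coeff p j = (\<Sum>i\<le>j. coeff r i * (lead_coeff q * coeff q (j - i)))"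
      by (simp add: sum_distrib_left mult.left_commute)
    also have "\<dots> \<ge> 0" by (intro sum_nonneg) (simp add: r(4) q_sign)
    finally show ?thesis .
  qed
qed

lemma real_poly_left_half_plane_nonneg_coeffs:
  fixes p :: "real poly"
  assumes zeros: "\<forall>z. poly (cpoly p) z = 0 \<longrightarrow> Re z \<le> 0" and "poly p 1 \<ge> 0"
  shows "coeff p j \<ge> 0"
proof -
  have sign: "lead_coeff p * coeff p i \<ge> 0" for i
    using real_poly_left_half_plane_coeff_sign[OF zeros] .
  have "p \<noteq> 0" using zeros[rule_format, of 1] by auto
  have "lead_coeff p > 0"
  proof (rule ccontr)
    assume "\<not> lead_coeff p > 0"
    with \<open>p \<noteq> 0\<close> have lc: "lead_coeff p < 0" by (simp add: not_less le_less)
    then have "coeff p i \<le> 0" for i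
      using sign[of i] by (simp add: mult_le_0_iff zero_le_mult_iff)
    then have "(\<Sum>i\<le>degree p. - coeff p i) \<ge> - lead_coeff p"
      by (intro member_le_sum) auto
    then have "poly p 1 < 0" using lc by (simp add: poly_altdef sum_negf)
    with \<open>poly p 1 \<ge> 0\<close> show False by simp
  qed
  then show ?thesis using sign[of j] by (simp add: zero_le_mult_iff)
qed

section \<open>Polynomials in the shift operator\<close>

text \<open>\<open>shift_op h f\<close> is \<open>h(S) f\<close> for the backward shift \<open>(S f)(z) = f (z - 1)\<close>.\<close>
definition shift_op :: "complex poly \<Rightarrow> (complex \<Rightarrow> complex) \<Rightarrow> complex \<Rightarrow> complex" where
  "shift_op h f z = (\<Sum>j\<le>degree h. coeff h j * f (z - of_nat j))"

lemma shift_op_eq_sum_atMost: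
  assumes "degree h \<le> N"
  shows "shift_op h f z = (\<Sum>j\<le>N. coeff h j * f (z - of_nat j))"
  unfolding shift_op_def using assms by (intro sum.mono_neutral_left) (auto simp: coeff_eq_0)

lemma shift_op_add: "shift_op (p + q) f z = shift_op p f z + shift_op q f z"
proof -
  define N where "N = max (degree p) (degree q)"
  have "shift_op (p + q) f z = (\<Sum>j\<le>N. coeff (p + q) j * f (z - of_nat j))"
    by (rule shift_op_eq_sum_atMost) (simp add: N_def degree_add_le_max)
  also have "\<dots> = shift_op p f z + shift_op q f z"
    by (simp add: shift_op_eq_sum_atMost[of _ N] N_def distrib_right sum.distrib)
  finally show ?thesis .
qed

lemma shift_op_0: "shift_op 0 f z = 0"
  by (simp add: shift_op_def)

lemma shift_op_sum: "shift_op (\<Sum>i\<in>A. p i) f z = (\<Sum>i\<in>A. shift_op (p i) f z)"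
  by (induction A rule: infinite_finite_induct) (simp_all add: shift_op_0 shift_op_add)

lemma shift_op_smult: "shift_op (smult c p) f z = c * shift_op p f z"
  by (simp add: shift_op_eq_sum_atMost[of "smult c p" "degree p"] shift_op_def
      sum_distrib_left mult.assoc)

lemma shift_op_monom: "shift_op (monom c m) f z = c * f (z - of_nat m)"
proof -
  have "shift_op (monom c m) f z = (\<Sum>j\<le>m. coeff (monom c m) j * f (z - of_nat j))"
    by (rule shift_op_eq_sum_atMost) (rule degree_monom_le)
  also have "\<dots> = (\<Sum>j\<le>m. if j = m then c * f (z - of_nat j) else 0)"
    by (rule sum.cong) (auto simp: coeff_monom)
  finally show ?thesis by simp
qed

lemma shift_op_pCons_0: "shift_op (pCons 0 p) f z = shift_op p f (z - 1)"
proof -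
  have "shift_op (pCons 0 p) f z = (\<Sum>j\<le>Suc (degree p). coeff (pCons 0 p) j * f (z - of_nat j))"
    by (rule shift_op_eq_sum_atMost) (simp add: degree_pCons_le)
  also have "\<dots> = shift_op p f (z - 1)"
    by (subst sum.atMost_Suc_shift) (simp add: shift_op_def algebra_simps)
  finally show ?thesis .
qed

lemma shift_op_linear_factor:
  "shift_op ([:-a, 1:] * h) f z = shift_op h f (z - 1) - a * shift_op h f z"
proof -
  have "[:-a, 1:] * h = smult (-a) h + pCons 0 h" by simp
  then show ?thesis by (simp only: shift_op_add shift_op_smult shift_op_pCons_0) simp
qed

lemma one_minus_monom_eq: "1 - monom 1 m = monom (-1) m + (1 :: 'a::comm_ring_1 poly)"
  by (simp flip: minus_monom)

lemma degree_one_minus_monom: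
  "m > 0 \<Longrightarrow> degree (1 - monom 1 m :: 'a::comm_ring_1 poly) = m"
  by (simp add: one_minus_monom_eq degree_add_eq_left degree_monom_eq)

lemma lead_coeff_one_minus_monom:
  "m > 0 \<Longrightarrow> lead_coeff (1 - monom 1 m :: 'a::comm_ring_1 poly) = -1"
  by (simp add: degree_one_minus_monom)

lemma prod_monom: "(\<Prod>i\<in>A. monom (c i) (m i)) = monom (\<Prod>i\<in>A. c i) (\<Sum>i\<in>A. m i)"
  by (induction A rule: infinite_finite_induct) (auto simp: mult_monom)

lemma shift_op_prod_one_minus_monom:
  assumes "finite A"
  shows "shift_op (\<Prod>i\<in>A. 1 - monom 1 (d i)) f z =
    (\<Sum>I\<in>Pow A. (-1) ^ card I * f (z - of_nat (sum d I)))"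
proof -
  have "(\<Prod>i\<in>A. 1 - monom 1 (d i)) = (\<Prod>i\<in>A. monom (-1) (d i) + 1 :: complex poly)"
    by (simp only: one_minus_monom_eq)
  also have "\<dots> = (\<Sum>I\<in>Pow A. monom ((-1) ^ card I) (sum d I))"
    using assms by (simp add: prod_add prod_monom)
  finally show ?thesis by (simp only: shift_op_sum shift_op_monom)
qed

lemma prod_one_minus_monom_unit_roots:
  assumes "finite A" and pos: "\<forall>i\<in>A. d i > 0"
  obtains a where
    "(\<Prod>i\<in>A. 1 - monom 1 (d i)) = smult ((-1) ^ card A) (\<Prod>j<sum d A. [:-a j, 1:])"
    "\<And>j. j < sum d A \<Longrightarrow> cmod (a j) = 1"
proof -
  define P :: "complex poly" where "P = (\<Prod>i\<in>A. 1 - monom 1 (d i))"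
  have deg: "degree P = sum d A"
    unfolding P_def using pos
    by (subst degree_prod_eq_sum_degree) (auto simp: degree_one_minus_monom monom_eq_1_iff)
  have lc: "lead_coeff P = (\<Prod>i\<in>A. -1)"
    unfolding P_def lead_coeff_prod using pos by (intro prod.cong refl lead_coeff_one_minus_monom) auto
  obtain a where a: "P = smult (lead_coeff P) (\<Prod>j<degree P. [:-a j, 1:])"
    using complex_poly_decompose'[of P] by metis
  show ?thesis
  proof (rule that)
    show "(\<Prod>i\<in>A. 1 - monom 1 (d i)) = smult ((-1) ^ card A) (\<Prod>j<sum d A. [:-a j, 1:])"
      using a deg lc by (simp add: P_def)
  next
    fix j assume "j < sum d A"
    then have "poly P (a j) = 0"
      using deg by (subst a) (auto simp: poly_prod)
    then obtain i where "i \<in> A" "a j ^ d i = 1"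
      using assms(1) by (auto simp: P_def poly_prod poly_monom)
    then have "cmod (a j) ^ d i = 1 ^ d i" by (simp flip: norm_power)
    with pos \<open>i \<in> A\<close> show "cmod (a j) = 1" by (subst (asm) power_eq_iff_eq_base) auto
  qed
qed

section \<open>Zeros of shifted differences of the binomial coefficient\<close>

lemma norm_diff_of_real_sq_diff:
  "cmod (w - of_real b) ^ 2 - cmod (w - of_real a) ^ 2 = (b - a) * (a + b - 2 * Re w)"
  by (simp only: cmod_power2) (simp add: power2_eq_square algebra_simps)

lemma norm_diff_of_real_le_iff:
  assumes "a < b"
  shows "cmod (w - of_real a) \<le> cmod (w - of_real b) \<longleftrightarrow> 2 * Re w \<le> a + b"
proof -
  have "cmod (w - of_real a) \<le> cmod (w - of_real b) \<longleftrightarrow>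
      cmod (w - of_real a) ^ 2 \<le> cmod (w - of_real b) ^ 2"
    by (simp add: power_mono_iff)
  also have "\<dots> \<longleftrightarrow> 0 \<le> (b - a) * (a + b - 2 * Re w)"
    by (simp flip: norm_diff_of_real_sq_diff)
  also have "\<dots> \<longleftrightarrow> 2 * Re w \<le> a + b"
    using assms by (auto simp: zero_le_mult_iff)
  finally show ?thesis .
qed

lemma norm_diff_of_real_ge_iff:
  assumes "a < b"
  shows "cmod (w - of_real b) \<le> cmod (w - of_real a) \<longleftrightarrow> a + b \<le> 2 * Re w"
proof -
  have "cmod (w - of_real b) \<le> cmod (w - of_real a) \<longleftrightarrow>
      cmod (w - of_real b) ^ 2 \<le> cmod (w - of_real a) ^ 2"
    by (simp add: power_mono_iff)
  also have "\<dots> \<longleftrightarrow> (b - a) * (a + b - 2 * Re w) \<le> 0"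
    by (simp flip: norm_diff_of_real_sq_diff)
  also have "\<dots> \<longleftrightarrow> a + b \<le> 2 * Re w"
    using assms by (auto simp: mult_le_0_iff)
  finally show ?thesis .
qed

lemma norm_poly_eq_prod_roots:
  fixes Q :: "complex poly"
  obtains r where "\<And>w. cmod (poly Q w) = cmod (lead_coeff Q) * (\<Prod>i<degree Q. cmod (w - r i))"
    and "\<And>i. i < degree Q \<Longrightarrow> poly Q (r i) = 0"
proof -
  obtain r where r: "Q = smult (lead_coeff Q) (\<Prod>i<degree Q. [:-r i, 1:])"
    using complex_poly_decompose'[of Q] by metis
  show ?thesis
  proof (rule that)
    show "cmod (poly Q w) = cmod (lead_coeff Q) * (\<Prod>i<degree Q. cmod (w - r i))" for w
      by (subst r) (simp add: poly_prod norm_mult prod_norm)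
    show "poly Q (r i) = 0" if "i < degree Q" for i
      using that by (subst r) (auto simp: poly_prod)
  qed
qed

text \<open>For a polynomial whose zeros lie on the line \<open>Re w = c\<close>, every factor \<open>|z - r|\<close> of
  \<open>|Q z|\<close> shrinks under \<open>z \<mapsto> z - 1\<close> exactly when \<open>z\<close> lies to the right of \<open>Re z = c + 1/2\<close>.\<close>
lemma norm_poly_shift_le:
  fixes Q :: "complex poly"
  assumes zeros: "\<And>w. poly Q w = 0 \<Longrightarrow> Re w = c" and "2 * c + 1 \<le> 2 * Re z"
  shows "cmod (poly Q (z - 1)) \<le> cmod (poly Q z)"
proof -
  obtain r where r: "\<And>w. cmod (poly Q w) = cmod (lead_coeff Q) * (\<Prod>i<degree Q. cmod (w - r i))"
    and roots: "\<And>i. i < degree Q \<Longrightarrow> poly Q (r i) = 0"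
    using norm_poly_eq_prod_roots[of Q] by blast
  have "cmod (z - r i - of_real 1) \<le> cmod (z - r i - of_real 0)" if "i < degree Q" for i
    using zeros[OF roots[OF that]] assms(2) by (subst norm_diff_of_real_ge_iff) auto
  then have "(\<Prod>i<degree Q. cmod (z - 1 - r i)) \<le> (\<Prod>i<degree Q. cmod (z - r i))"
    by (intro prod_mono) (simp add: algebra_simps)
  then show ?thesis by (simp add: r mult_left_mono)
qed

lemma norm_poly_shift_less:
  fixes Q :: "complex poly"
  assumes zeros: "\<And>w. poly Q w = 0 \<Longrightarrow> Re w = c" and "2 * c + 1 < 2 * Re z" "degree Q > 0"
  shows "cmod (poly Q (z - 1)) < cmod (poly Q z)"
proof -
  obtain r where r: "\<And>w. cmod (poly Q w) = cmod (lead_coeff Q) * (\<Prod>i<degree Q. cmod (w - r i))"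
    and roots: "\<And>i. i < degree Q \<Longrightarrow> poly Q (r i) = 0"
    using norm_poly_eq_prod_roots[of Q] by blast
  have factor: "cmod (z - 1 - r i) < cmod (z - r i)" if "i < degree Q" for i
    using zeros[OF roots[OF that]] assms(2) norm_diff_of_real_le_iff[of 0 1 "z - r i"]
    by (simp add: algebra_simps)
  have "0 < cmod (z - r i)" if "i < degree Q" for i
    using factor[OF that] norm_ge_zero[of "z - 1 - r i"] by linarith
  then have "(\<Prod>i<degree Q. cmod (z - 1 - r i)) < (\<Prod>i<degree Q. cmod (z - r i))"
    using assms(3) factor by (intro prod_mono_strict[of 0]) (auto intro: less_imp_le)
  moreover have "lead_coeff Q \<noteq> 0" using assms(3) by auto
  ultimately show ?thesis by (simp add: r)
qed

lemma norm_poly_shift_ge: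
  fixes Q :: "complex poly"
  assumes zeros: "\<And>w. poly Q w = 0 \<Longrightarrow> Re w = c" and "2 * Re z \<le> 2 * c + 1"
  shows "cmod (poly Q z) \<le> cmod (poly Q (z - 1))"
proof -
  obtain r where r: "\<And>w. cmod (poly Q w) = cmod (lead_coeff Q) * (\<Prod>i<degree Q. cmod (w - r i))"
    and roots: "\<And>i. i < degree Q \<Longrightarrow> poly Q (r i) = 0"
    using norm_poly_eq_prod_roots[of Q] by blast
  have "cmod (z - r i - of_real 0) \<le> cmod (z - r i - of_real 1)" if "i < degree Q" for i
    using zeros[OF roots[OF that]] assms(2) by (subst norm_diff_of_real_le_iff) auto
  then have "(\<Prod>i<degree Q. cmod (z - r i)) \<le> (\<Prod>i<degree Q. cmod (z - 1 - r i))"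
    by (intro prod_mono) (simp add: algebra_simps)
  then show ?thesis by (simp add: r mult_left_mono)
qed

text \<open>The invariant: after \<open>n - m\<close> factors \<open>S - a\<close> have acted on \<open>(z + n) gchoose n = (z + 1) \<cdots> (z + n) / n!\<close>,
  the factors \<open>z + m + 1, \<dots>, z + n\<close> are used up and the remaining factor has all its zeros on the
  line \<open>Re z = -(m + 1) / 2\<close>.\<close>
definition pochhammer_line_form :: "nat \<Rightarrow> (complex \<Rightarrow> complex) \<Rightarrow> bool" where
  "pochhammer_line_form m \<phi> \<longleftrightarrow> (\<exists>Q. (\<forall>z. \<phi> z = pochhammer (z + 1) m * poly Q z) \<and>
     (\<forall>z. poly Q z = 0 \<longrightarrow> Re z = - (real m + 1) / 2))"

lemma pochhammer_line_form_binomial: "pochhammer_line_form n (\<lambda>z. (z + of_nat n) gchoose n)"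
  unfolding pochhammer_line_form_def
  by (intro exI[of _ "[:1 / fact n:]"]) (simp add: gbinomial_pochhammer')

lemma pochhammer_line_form_zero_Re_neg:
  assumes "pochhammer_line_form m \<phi>" "\<phi> z = 0"
  shows "Re z < 0"
proof -
  obtain Q where \<phi>: "\<phi> z = pochhammer (z + 1) m * poly Q z"
    and zeros: "\<forall>z. poly Q z = 0 \<longrightarrow> Re z = - (real m + 1) / 2"
    using assms(1) unfolding pochhammer_line_form_def by blast
  show ?thesis
  proof (cases "poly Q z = 0")
    case True
    with zeros have "Re z = - (real m + 1) / 2" by blast
    then show ?thesis by (simp add: field_simps)
  next
    case False
    with \<phi> assms(2) obtain k where "z + 1 = - of_nat k"
      by (auto simp: pochhammer_eq_0_iff)
    then have "Re z = - 1 - real k" by (simp add: complex_eq_iff algebra_simps)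
    then show ?thesis by simp
  qed
qed

text \<open>The step below is a Lee--Yang type argument: off the new line one of the two terms of
  \<open>z Q(z - 1) - a (z + m + 1) Q(z)\<close> strictly dominates the other in modulus.\<close>
lemma pochhammer_line_form_shift:
  assumes "pochhammer_line_form (Suc m) \<phi>" and unit: "cmod a = 1"
  shows "pochhammer_line_form m (\<lambda>z. \<phi> (z - 1) - a * \<phi> z)"
proof -
  define L :: real where "L = real (Suc m)"
  define c :: real where "c = - (L + 1) / 2"
  have line: "2 * c + 1 = - L" by (simp add: c_def field_simps)
  obtain Q where \<phi>: "\<And>z. \<phi> z = pochhammer (z + 1) (Suc m) * poly Q z"
    and zeros: "\<And>z. poly Q z = 0 \<Longrightarrow> Re z = c"
    using assms(1) unfolding pochhammer_line_form_def L_def c_def by blast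
  define Q' where "Q' = [:0, 1:] * pcompose Q [:-1, 1:] - smult a ([:of_real L, 1:] * Q)"
  have Q': "poly Q' z = z * poly Q (z - 1) - a * ((z + of_real L) * poly Q z)" for z
    by (simp add: Q'_def poly_pcompose algebra_simps)
  have "\<phi> (z - 1) - a * \<phi> z = pochhammer (z + 1) m * poly Q' z" for z
  proof -
    have "\<phi> (z - 1) = z * pochhammer (z + 1) m * poly Q (z - 1)"
      by (simp add: \<phi> pochhammer_rec)
    moreover have "\<phi> z = pochhammer (z + 1) m * (z + of_real L) * poly Q z"
      by (simp add: \<phi> pochhammer_Suc L_def algebra_simps)
    ultimately show ?thesis by (simp add: Q' algebra_simps)
  qed
  moreover have "Re z = - (real m + 1) / 2" if "poly Q' z = 0" for z
  proof (rule ccontr)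
    assume "Re z \<noteq> - (real m + 1) / 2"
    then consider (right) "- L < 2 * Re z" | (left) "2 * Re z < - L"
      by (fastforce simp: L_def field_simps)
    then show False
    proof cases
      case right
      then have "poly Q z \<noteq> 0" using line by (auto dest: zeros)
      have "cmod (poly Q (z - 1)) \<le> cmod (poly Q z)"
        using norm_poly_shift_le[of Q c z, OF zeros, unfolded line] right by simp
      then have "cmod (z * poly Q (z - 1)) \<le> cmod z * cmod (poly Q z)"
        by (simp add: norm_mult mult_left_mono)
      also have "\<dots> < cmod (z + of_real L) * cmod (poly Q z)"
        using \<open>poly Q z \<noteq> 0\<close> right norm_diff_of_real_le_iff[of "-L" 0 z]
        by (intro mult_strict_right_mono) (auto simp: L_def algebra_simps)
      also have "\<dots> = cmod (a * ((z + of_real L) * poly Q z))"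
        by (simp add: unit norm_mult)
      finally show False using that by (simp add: Q')
    next
      case left
      then have "poly Q (z - 1) \<noteq> 0" using line by (auto dest: zeros)
      have "cmod (poly Q z) \<le> cmod (poly Q (z - 1))"
        using norm_poly_shift_ge[of Q c z, OF zeros, unfolded line] left by simp
      then have "cmod (a * ((z + of_real L) * poly Q z)) \<le> cmod (z + of_real L) * cmod (poly Q (z - 1))"
        by (simp add: unit norm_mult mult_left_mono)
      also have "\<dots> < cmod z * cmod (poly Q (z - 1))"
        using \<open>poly Q (z - 1) \<noteq> 0\<close> left norm_diff_of_real_ge_iff[of "-L" 0 z]
        by (intro mult_strict_right_mono) (auto simp: L_def algebra_simps)
      also have "\<dots> = cmod (z * poly Q (z - 1))"
        by (simp add: norm_mult)
      finally show False using that by (simp add: Q')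
    qed
  qed
  ultimately show ?thesis unfolding pochhammer_line_form_def by blast
qed

lemma pochhammer_line_form_0_shift_zero:
  assumes "pochhammer_line_form 0 \<phi>" and unit: "cmod a = 1"
    and zero: "\<phi> (z - 1) - a * \<phi> z = 0" and "Re z > 0"
  shows "\<phi> (w - 1) - a * \<phi> w = 0"
proof -
  obtain Q where \<phi>: "\<And>z. \<phi> z = poly Q z" and zeros: "\<And>z. poly Q z = 0 \<Longrightarrow> Re z = - 1 / 2"
    using assms(1) unfolding pochhammer_line_form_def by auto
  show ?thesis
  proof (cases "degree Q = 0")
    case True
    then obtain q where "Q = [:q:]" by (rule degree_eq_zeroE)
    with zero show ?thesis by (simp add: \<phi>)
  next
    case False
    then have "cmod (poly Q (z - 1)) < cmod (poly Q z)"
      using norm_poly_shift_less[OF zeros] \<open>Re z > 0\<close> by simp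
    also have "\<dots> = cmod (a * poly Q z)" by (simp add: unit norm_mult)
    finally show ?thesis using zero by (simp add: \<phi>)
  qed
qed

lemma shift_op_one: "shift_op 1 f = f"
  by (simp add: shift_op_def fun_eq_iff)

lemma shift_op_prod_lessThan_Suc:
  "shift_op (\<Prod>j<Suc m. [:-a j, 1:]) f =
    (\<lambda>z. shift_op (\<Prod>j<m. [:-a j, 1:]) f (z - 1) - a m * shift_op (\<Prod>j<m. [:-a j, 1:]) f z)"
proof -
  have "(\<Prod>j<Suc m. [:-a j, 1:]) = [:-a m, 1:] * (\<Prod>j<m. [:-a j, 1:])"
    unfolding prod.lessThan_Suc by (rule mult.commute)
  then show ?thesis by (intro ext) (simp only: shift_op_linear_factor)
qed

lemma pochhammer_line_form_shift_op_binomial: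
  assumes "m \<le> n" "\<And>j. j < m \<Longrightarrow> cmod (a j) = 1"
  shows "pochhammer_line_form (n - m) (shift_op (\<Prod>j<m. [:-a j, 1:]) (\<lambda>z. (z + of_nat n) gchoose n))"
  using assms
proof (induction m)
  case 0
  then show ?case by (simp add: shift_op_one pochhammer_line_form_binomial)
next
  case (Suc m)
  then have "pochhammer_line_form (Suc (n - Suc m))
      (shift_op (\<Prod>j<m. [:-a j, 1:]) (\<lambda>z. (z + of_nat n) gchoose n))"
    by (simp add: Suc_diff_Suc)
  then show ?case
    unfolding shift_op_prod_lessThan_Suc using Suc.prems by (intro pochhammer_line_form_shift) auto
qed

lemma shift_op_binomial_zero_right_half_plane:
  assumes "m \<le> n + 1" "\<And>j. j < m \<Longrightarrow> cmod (a j) = 1"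
    and zero: "shift_op (\<Prod>j<m. [:-a j, 1:]) (\<lambda>z. (z + of_nat n) gchoose n) z = 0" and "Re z > 0"
  shows "shift_op (\<Prod>j<m. [:-a j, 1:]) (\<lambda>z. (z + of_nat n) gchoose n) w = 0"
proof (cases "m \<le> n")
  case True
  with zero \<open>Re z > 0\<close> show ?thesis
    using pochhammer_line_form_zero_Re_neg[OF pochhammer_line_form_shift_op_binomial[OF True assms(2)]]
    by fastforce
next
  case False
  with assms(1) have m: "m = Suc n" by simp
  define \<psi> where "\<psi> = shift_op (\<Prod>j<n. [:-a j, 1:]) (\<lambda>z. (z + of_nat n) gchoose n)"
  have "pochhammer_line_form 0 \<psi>"
    using pochhammer_line_form_shift_op_binomial[of n n a] assms(2) m by (simp add: \<psi>_def)
  moreover have "\<psi> (z - 1) - a n * \<psi> z = 0"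
    using zero unfolding m shift_op_prod_lessThan_Suc \<psi>_def .
  ultimately have "\<psi> (w - 1) - a n * \<psi> w = 0"
    using pochhammer_line_form_0_shift_zero assms(2) m \<open>Re z > 0\<close> by simp
  then show ?thesis unfolding m shift_op_prod_lessThan_Suc \<psi>_def .
qed

section \<open>The polynomial \<open>F\<^sub>n\<close>\<close>

definition binomial_poly :: "'a::field_char_0 \<Rightarrow> nat \<Rightarrow> 'a poly" where
  "binomial_poly c n = smult (1 / fact n) (\<Prod>i<n. [:c - of_nat n + 1 + of_nat i, 1:])"

lemma poly_binomial_poly: "poly (binomial_poly c n) x = (x + c) gchoose n"
proof -
  have "(x + c) gchoose n = pochhammer (x + c - of_nat n + 1) n / fact n"
    by (rule gbinomial_pochhammer')
  also have "pochhammer (x + c - of_nat n + 1) n = (\<Prod>i<n. c - of_nat n + 1 + of_nat i + x)"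
    by (simp add: pochhammer_prod lessThan_atLeast0 algebra_simps)
  finally show ?thesis by (simp add: binomial_poly_def poly_prod)
qed

lemma cpoly_binomial_poly: "cpoly (binomial_poly c n) = binomial_poly (of_real c) n"
  by (simp add: binomial_poly_def cpoly_smult cpoly_prod map_poly_pCons)

definition F_poly :: "nat \<Rightarrow> nat \<Rightarrow> (nat \<Rightarrow> nat) \<Rightarrow> real poly" where
  "F_poly n k d = (\<Sum>I\<in>Pow {1..k}. smult ((-1) ^ card I) (binomial_poly (real n - real (sum d I)) n))"

lemma poly_F_poly: "poly (F_poly n k d) t = F n k d t"
  by (simp add: F_poly_def F_def poly_sum poly_binomial_poly algebra_simps)

lemma poly_cpoly_F_poly_shift_op:
  assumes "\<forall>i\<in>{1..k}. d i > 0"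
  obtains a where "\<And>j. j < sum d {1..k} \<Longrightarrow> cmod (a j) = 1"
    and "\<And>z. poly (cpoly (F_poly n k d)) z = (-1) ^ k *
      shift_op (\<Prod>j<sum d {1..k}. [:-a j, 1:]) (\<lambda>z. (z + of_nat n) gchoose n) z"
proof -
  obtain a where a: "(\<Prod>i\<in>{1..k}. 1 - monom 1 (d i)) = smult ((-1) ^ k) (\<Prod>j<sum d {1..k}. [:-a j, 1:])"
    and unit: "\<And>j. j < sum d {1..k} \<Longrightarrow> cmod (a j) = 1"
    using prod_one_minus_monom_unit_roots[of "{1..k}" d] assms by auto
  show ?thesis
  proof (rule that[OF unit])
    fix z
    have "poly (cpoly (F_poly n k d)) z =
        shift_op (\<Prod>i\<in>{1..k}. 1 - monom 1 (d i)) (\<lambda>z. (z + of_nat n) gchoose n) z"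
      by (simp add: shift_op_prod_one_minus_monom F_poly_def cpoly_sum cpoly_smult
          cpoly_binomial_poly poly_sum poly_binomial_poly algebra_simps)
    then show "poly (cpoly (F_poly n k d)) z = (-1) ^ k *
        shift_op (\<Prod>j<sum d {1..k}. [:-a j, 1:]) (\<lambda>z. (z + of_nat n) gchoose n) z"
      by (simp only: a shift_op_smult)
  qed
qed

lemma F_poly_zeros_Re_nonpos:
  assumes "\<forall>i\<in>{1..k}. d i > 0" and "sum d {1..k} \<le> n + 1"
    and zero: "poly (cpoly (F_poly n k d)) z = 0" and nonzero: "F_poly n k d \<noteq> 0"
  shows "Re z \<le> 0"
proof (rule ccontr)
  assume "\<not> Re z \<le> 0"
  obtain a where unit: "\<And>j. j < sum d {1..k} \<Longrightarrow> cmod (a j) = 1"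
    and F: "\<And>z. poly (cpoly (F_poly n k d)) z = (-1) ^ k *
      shift_op (\<Prod>j<sum d {1..k}. [:-a j, 1:]) (\<lambda>z. (z + of_nat n) gchoose n) z"
    using poly_cpoly_F_poly_shift_op[OF assms(1)] by blast
  have "poly (cpoly (F_poly n k d)) w = 0" for w
    using shift_op_binomial_zero_right_half_plane[OF assms(2) unit, where z = z and w = w] zero \<open>\<not> Re z \<le> 0\<close>
    by (simp add: F)
  then have "cpoly (F_poly n k d) = 0" by (simp add: poly_all_0_iff_0[symmetric])
  with nonzero show False by (simp add: map_poly_eq_0_iff)
qed

text \<open>At \<open>t = 1\<close> all arguments \<open>n + 1 - d\<^sub>I\<close> are natural numbers, so only \<open>I = {}\<close> and the
  singletons \<open>I = {i}\<close> with \<open>d i = 1\<close> contribute: \<open>F\<^sub>n(1) \<ge> (n + 1) - k \<ge> 0\<close>.\<close>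
lemma F_at_1_nonneg:
  assumes "n \<ge> 1" and pos: "\<forall>i\<in>{1..k}. d i > 0" and bound: "sum d {1..k} \<le> n + 1"
  shows "F n k d 1 \<ge> 0"
proof -
  define g :: "nat set \<Rightarrow> real" where
    "g I = (if I = {} then real n + 1 else 0) - (if card I = 1 then 1 else 0)" for I
  have card_le: "card I \<le> sum d I" if "I \<subseteq> {1..k}" for I
    using that pos sum_mono[of I "\<lambda>_. 1::nat" d] by (force simp: Suc_le_eq)
  have term_bound: "g I \<le> (-1) ^ card I * ((1 + real n - real (sum d I)) gchoose n)"
    if I: "I \<in> Pow {1..k}" for I
  proof -
    have "sum d I \<le> n + 1" using I bound sum_mono2[of "{1..k}" I d] by auto
    then have val: "(1 + real n - real (sum d I)) gchoose n = real ((n + 1 - sum d I) choose n)"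
      by (simp add: binomial_gbinomial of_nat_diff)
    have "finite I" using I finite_subset by blast
    consider "I = {}" | "card I = 1" | "card I \<ge> 2"
      using \<open>finite I\<close> by (metis One_nat_def card_0_eq less_2_cases not_less)
    then show ?thesis
    proof cases
      case 1
      with val show ?thesis by (simp add: g_def)
    next
      case 2
      then have "n + 1 - sum d I \<le> n" using card_le[of I] I by auto
      then have "(n + 1 - sum d I) choose n \<le> 1"
        by (cases "n + 1 - sum d I = n") (auto simp: binomial_eq_0)
      with 2 val show ?thesis by (auto simp: g_def)
    next
      case 3
      then have "n + 1 - sum d I < n" using card_le[of I] I \<open>n \<ge> 1\<close> by auto
      with 3 val show ?thesis by (auto simp: g_def binomial_eq_0)
    qed
  qed
  have "(\<Sum>I\<in>Pow {1..k}. g I) = real n + 1 - real (card {I. I \<subseteq> {1..k} \<and> card I = 1})"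
    by (simp add: g_def sum_subtractf sum.If_cases Int_def)
  also have "\<dots> = real n + 1 - real k" by (simp add: n_subsets)
  also have "\<dots> \<ge> 0" using card_le[of "{1..k}"] bound by simp
  finally have "0 \<le> (\<Sum>I\<in>Pow {1..k}. g I)" .
  also have "\<dots> \<le> F n k d 1" unfolding F_def using term_bound by (intro sum_mono) auto
  finally show ?thesis .
qed

theorem theorem3p6:
  fixes n k :: nat and d :: "nat \<Rightarrow> nat"
  assumes "n \<ge> 1"
    and "\<forall>i\<in>{1..k}. d i > 0"
    and "(\<Sum>i=1..k. d i) \<le> n + 1"
  shows "\<exists>p :: real poly. (\<forall>t. F n k d t = poly p t) \<and> (\<forall>j. coeff p j \<ge> 0)"
proof -
  have "coeff (F_poly n k d) j \<ge> 0" for j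
  proof (cases "F_poly n k d = 0")
    case False
    then have "\<forall>z. poly (cpoly (F_poly n k d)) z = 0 \<longrightarrow> Re z \<le> 0"
      using F_poly_zeros_Re_nonpos assms(2,3) by blast
    moreover have "poly (F_poly n k d) 1 \<ge> 0"
      using F_at_1_nonneg[OF assms] by (simp add: poly_F_poly)
    ultimately show ?thesis by (rule real_poly_left_half_plane_nonneg_coeffs)
  qed simp
  then show ?thesis by (intro exI[of _ "F_poly n k d"]) (simp add: poly_F_poly)
qed

end
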